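(* The space $\widetilde{l_1}$ has the Schur property, i.e., every weakly null sequence in $\widetilde{l_1}$ converges to $0$ in norm.
   Context: For a real sequence $a=(a_n)_{n\ge1}$ let $\widetilde{a_n}=\sup_{k\ge n}|a_k|$. The Tandori sequence space $\widetilde{l_1}$ is the space of sequences $a$ with $\|a\|_{\widetilde{l_1}}=\sum_{n=1}^\infty\widetilde{a_n}<\infty$. *)

theory Defs
  imports "HOL-Analysis.Analysis"
begin

text \<open>Sequences are indexed from 0 (a shift of the paper's indexing from 1).\<close>

definition tilde :: "(nat \<Rightarrow> real) \<Rightarrow> nat \<Rightarrow> real" where
  "tilde a n = (SUP k\<in>{n..}. \<bar>a k\<bar>)"

definition tandori_norm :: "(nat \<Rightarrow> real) \<Rightarrow> real" where
  "tandori_norm a = (\<Sum>n. tilde a n)"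

definition tandori_space :: "(nat \<Rightarrow> real) set" where
  "tandori_space = {a. bdd_above (range (\<lambda>k. \<bar>a k\<bar>)) \<and> summable (tilde a)}"

definition tandori_dual :: "((nat \<Rightarrow> real) \<Rightarrow> real) set" where
  "tandori_dual = {\<phi>.
     (\<forall>a\<in>tandori_space. \<forall>b\<in>tandori_space. \<phi> (\<lambda>k. a k + b k) = \<phi> a + \<phi> b) \<and>
     (\<forall>c. \<forall>a\<in>tandori_space. \<phi> (\<lambda>k. c * a k) = c * \<phi> a) \<and>
     (\<exists>C. \<forall>a\<in>tandori_space. \<bar>\<phi> a\<bar> \<le> C * tandori_norm a)}"

definition tandori_weakly_null :: "(nat \<Rightarrow> nat \<Rightarrow> real) \<Rightarrow> bool" where
  "tandori_weakly_null x \<longleftrightarrow> (\<forall>j. x j \<in> tandori_space) \<and>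
     (\<forall>\<phi>\<in>tandori_dual. (\<lambda>j. \<phi> (x j)) \<longlonglongrightarrow> 0)"

end

theory Submission
  imports Defs
begin

text \<open>Coordinate functionals are bounded, so a weakly null sequence x_j tends to 0
coordinatewise. If the tails sum_{n >= N} tilde x_j n are uniformly small for large j, this
forces sup_k |x_j k| -> 0 and hence ||x_j|| -> 0. Otherwise a gliding hump gives a functional
phi a = sum_n c_n a(kappa n) with |c_n| <= 1 and kappa n >= n, bounded because
|a(kappa n)| <= tilde a n: on consecutive blocks [N_i, N_{i+1}) it samples some x_{j_i} near its
suprema, where j_i is chosen so that x_{j_i} is tiny on the coordinates read by earlier blocks and
N_{i+1} so that the tail of x_{j_i} beyond it is tiny; then phi(x_{j_i}) stays away from 0.\<close>

lemma tandori_space_bdd_above: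
  "a \<in> tandori_space \<Longrightarrow> bdd_above ((\<lambda>k. \<bar>a k\<bar>) ` {n..})"
  unfolding tandori_space_def by (auto intro: bdd_above_mono)

lemma summable_tilde: "a \<in> tandori_space \<Longrightarrow> summable (tilde a)"
  unfolding tandori_space_def by auto

lemma abs_le_tilde: "a \<in> tandori_space \<Longrightarrow> n \<le> k \<Longrightarrow> \<bar>a k\<bar> \<le> tilde a n"
  unfolding tilde_def by (rule cSUP_upper) (auto simp: tandori_space_bdd_above)

lemma tilde_nonneg: "a \<in> tandori_space \<Longrightarrow> 0 \<le> tilde a n"
  using abs_le_tilde[of a n n] by linarith

lemma tilde_antimono: "a \<in> tandori_space \<Longrightarrow> m \<le> n \<Longrightarrow> tilde a n \<le> tilde a m"
  unfolding tilde_def by (rule cSUP_subset_mono) (auto simp: tandori_space_bdd_above)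

lemma tilde_zero_le:
  assumes "a \<in> tandori_space" and "\<And>k. k < N \<Longrightarrow> \<bar>a k\<bar> \<le> \<eta>" and "tilde a N \<le> \<eta>"
  shows "tilde a 0 \<le> \<eta>"
  unfolding tilde_def
proof (rule cSUP_least)
  show "\<bar>a k\<bar> \<le> \<eta>" for k
    using assms abs_le_tilde[OF assms(1), of N k] by (cases "k < N") auto
qed simp

lemma summable_tilde_tail: "a \<in> tandori_space \<Longrightarrow> summable (\<lambda>n. tilde a (n + N))"
  by (rule summable_ignore_initial_segment[OF summable_tilde])

lemma tilde_le_tilde_tail:
  assumes "a \<in> tandori_space"
  shows "tilde a N \<le> (\<Sum>n. tilde a (n + N))"
  using sum_le_suminf[OF summable_tilde_tail[OF assms], where I="{0}"] by (auto simp: tilde_nonneg[OF assms])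

lemma tandori_norm_le_head_tail:
  assumes "a \<in> tandori_space"
  shows "tandori_norm a \<le> real N * tilde a 0 + (\<Sum>n. tilde a (n + N))"
proof -
  have "(\<Sum>n<N. tilde a n) \<le> (\<Sum>n<N. tilde a 0)"
    by (rule sum_mono) (simp add: tilde_antimono[OF assms])
  then show ?thesis
    using suminf_split_initial_segment[OF summable_tilde[OF assms], of N]
    by (simp add: tandori_norm_def)
qed

lemma tandori_norm_nonneg: "a \<in> tandori_space \<Longrightarrow> 0 \<le> tandori_norm a"
  unfolding tandori_norm_def by (rule suminf_nonneg) (auto simp: summable_tilde tilde_nonneg)

definition near_sup_index :: "(nat \<Rightarrow> real) \<Rightarrow> nat \<Rightarrow> nat" where
  "near_sup_index a n = (SOME k. n \<le> k \<and> tilde a n \<le> 2 * \<bar>a k\<bar>)"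

lemma near_sup_index:
  assumes "a \<in> tandori_space"
  shows "n \<le> near_sup_index a n" and "tilde a n \<le> 2 * \<bar>a (near_sup_index a n)\<bar>"
proof -
  have "\<exists>k. n \<le> k \<and> tilde a n \<le> 2 * \<bar>a k\<bar>"
  proof (cases "tilde a n > 0")
    case True
    then have "tilde a n / 2 < (SUP k\<in>{n..}. \<bar>a k\<bar>)" by (simp add: tilde_def)
    then obtain k where "n \<le> k" "tilde a n / 2 < \<bar>a k\<bar>"
      by (subst (asm) less_cSUP_iff) (auto simp: tandori_space_bdd_above[OF assms])
    then show ?thesis by (intro exI[of _ k]) auto
  qed auto
  then have "n \<le> near_sup_index a n \<and> tilde a n \<le> 2 * \<bar>a (near_sup_index a n)\<bar>"
    unfolding near_sup_index_def by (rule someI_ex)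
  then show "n \<le> near_sup_index a n" and "tilde a n \<le> 2 * \<bar>a (near_sup_index a n)\<bar>"
    by auto
qed

definition sampling_functional :: "(nat \<Rightarrow> real) \<Rightarrow> (nat \<Rightarrow> nat) \<Rightarrow> (nat \<Rightarrow> real) \<Rightarrow> real" where
  "sampling_functional c \<kappa> a = (\<Sum>n. c n * a (\<kappa> n))"

context
  fixes c :: "nat \<Rightarrow> real" and \<kappa> :: "nat \<Rightarrow> nat"
  assumes weight_bound: "\<And>n. \<bar>c n\<bar> \<le> 1" and index_ge: "\<And>n. n \<le> \<kappa> n"
begin

lemma abs_sampling_term_le_tilde:
  assumes "a \<in> tandori_space"
  shows "\<bar>c n * a (\<kappa> n)\<bar> \<le> tilde a n"
proof -
  have "\<bar>c n\<bar> * \<bar>a (\<kappa> n)\<bar> \<le> 1 * tilde a n"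
    by (rule mult_mono) (auto simp: weight_bound abs_le_tilde[OF assms index_ge] tilde_nonneg[OF assms])
  then show ?thesis by (simp add: abs_mult)
qed

lemma summable_abs_sampling_tail:
  "a \<in> tandori_space \<Longrightarrow> summable (\<lambda>n. \<bar>c (n + N) * a (\<kappa> (n + N))\<bar>)"
  by (rule summable_comparison_test[OF _ summable_tilde_tail])
     (auto intro!: exI abs_sampling_term_le_tilde)

lemma summable_sampling_terms: "a \<in> tandori_space \<Longrightarrow> summable (\<lambda>n. c n * a (\<kappa> n))"
  using summable_abs_sampling_tail[of a 0] by (simp add: summable_rabs_cancel)

lemma abs_sampling_tail_le:
  assumes "a \<in> tandori_space"
  shows "\<bar>\<Sum>n. c (n + N) * a (\<kappa> (n + N))\<bar> \<le> (\<Sum>n. tilde a (n + N))"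
proof -
  have "\<bar>\<Sum>n. c (n + N) * a (\<kappa> (n + N))\<bar> \<le> (\<Sum>n. \<bar>c (n + N) * a (\<kappa> (n + N))\<bar>)"
    by (rule summable_rabs[OF summable_abs_sampling_tail[OF assms]])
  also have "\<dots> \<le> (\<Sum>n. tilde a (n + N))"
    by (rule suminf_le[OF _ summable_abs_sampling_tail[OF assms] summable_tilde_tail[OF assms]])
       (rule abs_sampling_term_le_tilde[OF assms])
  finally show ?thesis .
qed

lemma sampling_functional_in_tandori_dual: "sampling_functional c \<kappa> \<in> tandori_dual"
  unfolding tandori_dual_def
proof (intro CollectI conjI ballI allI exI[of _ 1])
  fix a b assume a: "a \<in> tandori_space" and b: "b \<in> tandori_space"
  show "sampling_functional c \<kappa> (\<lambda>k. a k + b k) = sampling_functional c \<kappa> a + sampling_functional c \<kappa> b"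
    using suminf_add[OF summable_sampling_terms[OF a] summable_sampling_terms[OF b]]
    by (simp add: sampling_functional_def distrib_left)
next
  fix r a assume "a \<in> tandori_space"
  show "sampling_functional c \<kappa> (\<lambda>k. r * a k) = r * sampling_functional c \<kappa> a"
    using suminf_mult[OF summable_sampling_terms[OF \<open>a \<in> tandori_space\<close>], of r]
    by (simp add: sampling_functional_def algebra_simps)
next
  fix a assume "a \<in> tandori_space"
  then show "\<bar>sampling_functional c \<kappa> a\<bar> \<le> 1 * tandori_norm a"
    using abs_sampling_tail_le[of a 0] by (simp add: sampling_functional_def tandori_norm_def)
qed

end

lemma coordinate_in_tandori_dual: "(\<lambda>a. a k) \<in> tandori_dual"
proof -
  have "sampling_functional (\<lambda>n. if n = 0 then 1 else 0) (\<lambda>n. n + k) = (\<lambda>a. a k)"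
  proof
    fix a :: "nat \<Rightarrow> real"
    have "(\<lambda>n. (if n = 0 then 1 else 0) * a (n + k)) = (\<lambda>n. if n = 0 then a (n + k) else 0)"
      by auto
    then show "sampling_functional (\<lambda>n. if n = 0 then 1 else 0) (\<lambda>n. n + k) a = a k"
      using sums_unique[OF sums_single[of 0 "\<lambda>n. a (n + k)"]] by (simp add: sampling_functional_def)
  qed
  moreover have "sampling_functional (\<lambda>n. if n = 0 then 1 else 0) (\<lambda>n. n + k) \<in> tandori_dual"
    by (rule sampling_functional_in_tandori_dual) auto
  ultimately show ?thesis by simp
qed

lemma tandori_norm_tendsto_zero_if_tails_small:
  fixes x :: "nat \<Rightarrow> nat \<Rightarrow> real"
  assumes space: "\<And>j. x j \<in> tandori_space" and coord: "\<And>k. (\<lambda>j. x j k) \<longlonglongrightarrow> 0"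
    and small_tails: "\<And>\<delta>. \<delta> > 0 \<Longrightarrow> \<exists>N. \<forall>\<^sub>F j in sequentially. (\<Sum>n. tilde (x j) (n + N)) \<le> \<delta>"
  shows "(\<lambda>j. tandori_norm (x j)) \<longlonglongrightarrow> 0"
proof -
  have sup_null: "(\<lambda>j. tilde (x j) 0) \<longlonglongrightarrow> 0"
  proof (rule order_tendstoI)
    fix e :: real assume "0 < e"
    then obtain N where tail: "\<forall>\<^sub>F j in sequentially. (\<Sum>n. tilde (x j) (n + N)) \<le> e / 2"
      using small_tails by (meson half_gt_zero)
    have "\<forall>\<^sub>F j in sequentially. \<bar>x j k\<bar> < e / 2" for k
      using \<open>0 < e\<close> by (intro order_tendstoD(2)[OF tendsto_rabs_zero[OF coord]]) auto
    then have "\<forall>\<^sub>F j in sequentially. \<forall>k\<in>{..<N}. \<bar>x j k\<bar> < e / 2"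
      by (intro eventually_ball_finite) auto
    with tail show "\<forall>\<^sub>F j in sequentially. tilde (x j) 0 < e"
    proof eventually_elim
      case (elim j)
      then have "tilde (x j) 0 \<le> e / 2"
        by (intro tilde_zero_le[OF space] order.trans[OF tilde_le_tilde_tail[OF space]])
           (auto simp: less_imp_le)
      with \<open>0 < e\<close> show ?case by linarith
    qed
  qed (auto intro!: always_eventually intro: less_le_trans[OF _ tilde_nonneg[OF space]])
  show ?thesis
  proof (rule order_tendstoI)
    fix e :: real assume "0 < e"
    then obtain N where tail: "\<forall>\<^sub>F j in sequentially. (\<Sum>n. tilde (x j) (n + N)) \<le> e / 2"
      using small_tails by (meson half_gt_zero)
    have "\<forall>\<^sub>F j in sequentially. real N * tilde (x j) 0 < e / 2"
      using \<open>0 < e\<close> by (intro order_tendstoD(2)[OF tendsto_mult_right_zero[OF sup_null]]) auto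
    with tail show "\<forall>\<^sub>F j in sequentially. tandori_norm (x j) < e"
    proof eventually_elim
      case (elim j)
      then show ?case using tandori_norm_le_head_tail[OF space, of j N] by linarith
    qed
  qed (auto intro!: always_eventually intro: less_le_trans[OF _ tandori_norm_nonneg[OF space]])
qed

definition block_index :: "(nat \<Rightarrow> nat) \<Rightarrow> nat \<Rightarrow> nat" where
  "block_index N n = (LEAST i. n < N (Suc i))"

lemma block_index_eq:
  assumes "strict_mono N" and "N i \<le> n" and "n < N (Suc i)"
  shows "block_index N n = i"
  unfolding block_index_def
proof (rule Least_equality)
  show "i \<le> l" if "n < N (Suc l)" for l
  proof (rule ccontr)
    assume "\<not> i \<le> l"
    then have "N (Suc l) \<le> N i" using strict_mono_less_eq[OF assms(1)] by simp
    then show False using that assms(2) by linarith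
  qed
qed (use assms in auto)

lemma less_next_block_index: "strict_mono N \<Longrightarrow> n < N (Suc (block_index N n))"
  unfolding block_index_def
  by (rule LeastI[of _ n]) (meson Suc_le_lessD seq_suble)

lemma block_index_less: "N 0 = 0 \<Longrightarrow> n < N i \<Longrightarrow> block_index N n < i"
  unfolding block_index_def
  by (cases i) (auto intro: le_less_trans[OF Least_le])

context
  fixes x :: "nat \<Rightarrow> nat \<Rightarrow> real" and \<delta> :: real
  assumes space: "\<And>j. x j \<in> tandori_space"
    and coord: "\<And>k. (\<lambda>j. x j k) \<longlonglongrightarrow> 0"
    and delta_pos: "0 < \<delta>"
    and big_tails: "\<And>N. \<exists>\<^sub>F j in sequentially. 4 * \<delta> < (\<Sum>n. tilde (x j) (n + N))"
begin

text \<open>\<open>B\<close> bounds the coordinates read on \<open>[0, N)\<close> by the blocks built so far.\<close>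

definition hump_block :: "nat \<Rightarrow> nat \<Rightarrow> nat \<Rightarrow> nat \<Rightarrow> nat \<Rightarrow> bool" where
  "hump_block N B j N' B' \<longleftrightarrow> N \<le> j \<and> real N * (\<Sum>k<B. \<bar>x j k\<bar>) \<le> \<delta> \<and> N < N' \<and>
     2 * \<delta> \<le> (\<Sum>n\<in>{N..<N'}. \<bar>x j (near_sup_index (x j) n)\<bar>) \<and>
     (\<Sum>n. tilde (x j) (n + N')) \<le> \<delta> / 2 \<and>
     B \<le> B' \<and> (\<forall>n<N'. near_sup_index (x j) n < B')"

lemma hump_block_exists: "\<exists>j N' B'. hump_block N B j N' B'"
proof -
  have "(\<lambda>j. real N * (\<Sum>k<B. \<bar>x j k\<bar>)) \<longlonglongrightarrow> 0"
    by (intro tendsto_mult_right_zero tendsto_null_sum tendsto_rabs_zero coord)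
  then have "\<forall>\<^sub>F j in sequentially. real N * (\<Sum>k<B. \<bar>x j k\<bar>) < \<delta>"
    using delta_pos by (rule order_tendstoD)
  then have "\<forall>\<^sub>F j in sequentially. N \<le> j \<and> real N * (\<Sum>k<B. \<bar>x j k\<bar>) < \<delta>"
    by (intro eventually_conj eventually_ge_at_top)
  from frequently_ex[OF frequently_eventually_conj[OF big_tails this]]
  obtain j where j: "N \<le> j" "real N * (\<Sum>k<B. \<bar>x j k\<bar>) < \<delta>"
    and big: "4 * \<delta> < (\<Sum>n. tilde (x j) (n + N))"
    by blast
  have "(\<lambda>m. \<Sum>n<m. tilde (x j) (n + N)) \<longlonglongrightarrow> (\<Sum>n. tilde (x j) (n + N))"
    by (rule summable_LIMSEQ[OF summable_tilde_tail[OF space]])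
  from eventually_happens'[OF _ order_tendstoD(1)[OF this big]]
  obtain m where m: "4 * \<delta> < (\<Sum>n<m. tilde (x j) (n + N))"
    by auto
  obtain N0 where N0: "\<And>n. N0 \<le> n \<Longrightarrow> \<bar>\<Sum>i. tilde (x j) (i + n)\<bar> < \<delta> / 2"
    using suminf_exist_split[OF _ summable_tilde[OF space], of "\<delta> / 2" j] delta_pos by auto
  define N' where "N' = Suc (max (N + m) N0)"
  define B' where "B' = max B (Suc (Max (near_sup_index (x j) ` {..<N'})))"
  have "4 * \<delta> < (\<Sum>n\<in>{N..<N + m}. tilde (x j) n)"
    using m sum.shift_bounds_nat_ivl[of "tilde (x j)" 0 N m] by (simp add: lessThan_atLeast0 add.commute)
  also have "\<dots> \<le> (\<Sum>n\<in>{N..<N + m}. 2 * \<bar>x j (near_sup_index (x j) n)\<bar>)"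
    by (rule sum_mono) (rule near_sup_index(2)[OF space])
  also have "\<dots> \<le> (\<Sum>n\<in>{N..<N'}. 2 * \<bar>x j (near_sup_index (x j) n)\<bar>)"
    by (rule sum_mono2) (auto simp: N'_def)
  finally have "2 * \<delta> \<le> (\<Sum>n\<in>{N..<N'}. \<bar>x j (near_sup_index (x j) n)\<bar>)"
    by (simp add: sum_distrib_left[symmetric])
  moreover have "(\<Sum>n. tilde (x j) (n + N')) \<le> \<delta> / 2"
    using N0[of N'] by (fastforce simp: N'_def)
  moreover have "near_sup_index (x j) n < B'" if "n < N'" for n
    unfolding B'_def using that by (simp add: le_imp_less_Suc less_max_iff_disj)
  ultimately have "hump_block N B j N' B'"
    using j by (auto simp: hump_block_def N'_def B'_def)
  then show ?thesis by blast
qed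

lemma hump_sequence_exists:
  "\<exists>Ns Bs js. Ns 0 = 0 \<and> (\<forall>i. hump_block (Ns i) (Bs i) (js i) (Ns (Suc i)) (Bs (Suc i)))"
proof -
  obtain nextj nextN nextB
    where choice: "\<And>N B. hump_block N B (nextj N B) (nextN N B) (nextB N B)"
    using hump_block_exists by metis
  define bounds where "bounds i = ((\<lambda>(N, B). (nextN N B, nextB N B)) ^^ i) (0, 0)" for i
  define Ns where "Ns i = fst (bounds i)" for i
  define Bs where "Bs i = snd (bounds i)" for i
  have "hump_block (Ns i) (Bs i) (nextj (Ns i) (Bs i)) (Ns (Suc i)) (Bs (Suc i))" for i
    using choice[of "Ns i" "Bs i"] by (simp add: Ns_def Bs_def bounds_def split_beta)
  moreover have "Ns 0 = 0" by (simp add: Ns_def bounds_def)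
  ultimately show ?thesis
    by (intro exI[of _ Ns] exI[of _ Bs] exI[of _ "\<lambda>i. nextj (Ns i) (Bs i)"]) simp
qed

definition hump_index :: "(nat \<Rightarrow> nat) \<Rightarrow> (nat \<Rightarrow> nat) \<Rightarrow> nat \<Rightarrow> nat" where
  "hump_index Ns js n = near_sup_index (x (js (block_index Ns n))) n"

definition hump_functional :: "(nat \<Rightarrow> nat) \<Rightarrow> (nat \<Rightarrow> nat) \<Rightarrow> (nat \<Rightarrow> real) \<Rightarrow> real" where
  "hump_functional Ns js = sampling_functional
     (\<lambda>n. sgn (x (js (block_index Ns n)) (hump_index Ns js n))) (hump_index Ns js)"

lemma hump_functional_in_tandori_dual: "hump_functional Ns js \<in> tandori_dual"
  unfolding hump_functional_def
  by (rule sampling_functional_in_tandori_dual)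
     (simp_all add: abs_sgn_eq hump_index_def near_sup_index(1)[OF space])

context
  fixes Ns Bs js :: "nat \<Rightarrow> nat"
  assumes Ns0: "Ns 0 = 0"
    and blocks: "\<And>i. hump_block (Ns i) (Bs i) (js i) (Ns (Suc i)) (Bs (Suc i))"
begin

lemma strict_mono_hump_starts: "strict_mono Ns"
  using blocks by (simp add: strict_mono_Suc_iff hump_block_def)

lemma hump_index_less_bound:
  assumes "n < Ns i"
  shows "hump_index Ns js n < Bs i"
proof -
  define l where "l = block_index Ns n"
  have "hump_index Ns js n < Bs (Suc l)"
    using blocks[of l] less_next_block_index[OF strict_mono_hump_starts, of n]
    by (simp add: hump_block_def hump_index_def l_def)
  also have "Bs (Suc l) \<le> Bs i"
  proof -
    have "incseq Bs" using blocks by (intro incseq_SucI) (simp add: hump_block_def)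
    moreover have "Suc l \<le> i" using block_index_less[of Ns, OF Ns0 assms] by (simp add: l_def)
    ultimately show ?thesis by (rule incseqD)
  qed
  finally show ?thesis .
qed

lemma hump_functional_large: "\<delta> / 2 \<le> hump_functional Ns js (x (js i))"
proof -
  define a where "a = x (js i)"
  define c where "c n = sgn (x (js (block_index Ns n)) (hump_index Ns js n))" for n
  let ?f = "\<lambda>n. c n * a (hump_index Ns js n)"
  have a: "a \<in> tandori_space" by (simp add: a_def space)
  have c_bound: "\<bar>c n\<bar> \<le> 1" for n by (simp add: c_def abs_sgn_eq)
  have index_ge: "n \<le> hump_index Ns js n" for n
    by (simp add: hump_index_def near_sup_index(1)[OF space])
  have hump: "hump_block (Ns i) (Bs i) (js i) (Ns (Suc i)) (Bs (Suc i))" by (rule blocks)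
  have "\<bar>\<Sum>n<Ns i. ?f n\<bar> \<le> (\<Sum>n<Ns i. \<Sum>k<Bs i. \<bar>a k\<bar>)"
  proof (rule order.trans[OF sum_abs], rule sum_mono)
    fix n assume "n \<in> {..<Ns i}"
    then have "hump_index Ns js n \<in> {..<Bs i}"
      using hump_index_less_bound by auto
    then have "\<bar>a (hump_index Ns js n)\<bar> \<le> (\<Sum>k<Bs i. \<bar>a k\<bar>)"
      by (rule member_le_sum[where f="\<lambda>k. \<bar>a k\<bar>"]) auto
    moreover have "\<bar>c n\<bar> * \<bar>a (hump_index Ns js n)\<bar> \<le> \<bar>a (hump_index Ns js n)\<bar>"
      by (rule mult_left_le_one_le) (simp_all add: c_bound)
    ultimately show "\<bar>c n * a (hump_index Ns js n)\<bar> \<le> (\<Sum>k<Bs i. \<bar>a k\<bar>)"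
      by (simp add: abs_mult)
  qed
  also have "\<dots> \<le> \<delta>" using hump by (simp add: hump_block_def a_def)
  finally have head: "\<bar>\<Sum>n<Ns i. ?f n\<bar> \<le> \<delta>" .
  have "?f n = \<bar>a (near_sup_index a n)\<bar>" if "n \<in> {Ns i..<Ns (Suc i)}" for n
  proof -
    have "block_index Ns n = i"
      using that by (intro block_index_eq[OF strict_mono_hump_starts]) auto
    then show ?thesis by (simp add: c_def hump_index_def a_def abs_sgn)
  qed
  then have middle: "2 * \<delta> \<le> (\<Sum>n\<in>{Ns i..<Ns (Suc i)}. ?f n)"
    using hump by (simp add: hump_block_def a_def)
  have tail: "\<bar>\<Sum>n. ?f (n + Ns (Suc i))\<bar> \<le> \<delta> / 2"
    using abs_sampling_tail_le[of c, OF c_bound index_ge a, where N="Ns (Suc i)"] hump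
    by (simp add: hump_block_def a_def)
  have "hump_functional Ns js a
      = (\<Sum>n. ?f (n + Ns (Suc i))) + (\<Sum>n<Ns i. ?f n) + (\<Sum>n\<in>{Ns i..<Ns (Suc i)}. ?f n)"
    using suminf_split_initial_segment[OF summable_sampling_terms[of c, OF c_bound index_ge a],
        where k="Ns (Suc i)"]
      sum.atLeastLessThan_concat[of 0 "Ns i" "Ns (Suc i)" ?f]
      strict_mono_less_eq[OF strict_mono_hump_starts, of i "Suc i"]
    by (simp add: hump_functional_def sampling_functional_def c_def lessThan_atLeast0)
  with head middle tail show ?thesis by (simp add: a_def)
qed

end

lemma gliding_hump: "\<exists>\<phi>\<in>tandori_dual. \<not> (\<lambda>j. \<phi> (x j)) \<longlonglongrightarrow> 0"
proof -
  obtain Ns Bs js where Ns0: "Ns 0 = 0"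
    and blocks: "\<And>i. hump_block (Ns i) (Bs i) (js i) (Ns (Suc i)) (Bs (Suc i))"
    using hump_sequence_exists by blast
  have "\<not> (\<lambda>j. hump_functional Ns js (x j)) \<longlonglongrightarrow> 0"
  proof
    assume "(\<lambda>j. hump_functional Ns js (x j)) \<longlonglongrightarrow> 0"
    then have "\<forall>\<^sub>F j in sequentially. hump_functional Ns js (x j) < \<delta> / 2"
      using delta_pos by (intro order_tendstoD(2)) auto
    then obtain J where "\<And>j. J \<le> j \<Longrightarrow> hump_functional Ns js (x j) < \<delta> / 2"
      by (auto simp: eventually_sequentially)
    moreover have "J \<le> js J"
      using blocks[of J] seq_suble[OF strict_mono_hump_starts[OF Ns0 blocks], of J]
      by (simp add: hump_block_def)
    ultimately show False
      using hump_functional_large[OF Ns0 blocks, of J] by fastforce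
  qed
  then show ?thesis using hump_functional_in_tandori_dual by blast
qed

end

theorem theorem1:
  fixes x :: "nat \<Rightarrow> nat \<Rightarrow> real"
  assumes "tandori_weakly_null x"
  shows "(\<lambda>j. tandori_norm (x j)) \<longlonglongrightarrow> 0"
proof -
  have space: "\<And>j. x j \<in> tandori_space"
    and weakly_null: "\<And>\<phi>. \<phi> \<in> tandori_dual \<Longrightarrow> (\<lambda>j. \<phi> (x j)) \<longlonglongrightarrow> 0"
    using assms unfolding tandori_weakly_null_def by auto
  have coord: "\<And>k. (\<lambda>j. x j k) \<longlonglongrightarrow> 0"
    using weakly_null[OF coordinate_in_tandori_dual] .
  show ?thesis
  proof (cases "\<exists>\<delta>>0. \<forall>N. \<exists>\<^sub>F j in sequentially. \<delta> < (\<Sum>n. tilde (x j) (n + N))")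
    case True
    then obtain \<delta> where "0 < \<delta> / 4" "\<And>N. \<exists>\<^sub>F j in sequentially. 4 * (\<delta> / 4) < (\<Sum>n. tilde (x j) (n + N))"
      by auto
    from gliding_hump[OF space coord this] weakly_null show ?thesis by blast
  next
    case False
    then have "\<And>\<delta>. 0 < \<delta> \<Longrightarrow> \<exists>N. \<forall>\<^sub>F j in sequentially. (\<Sum>n. tilde (x j) (n + N)) \<le> \<delta>"
      by (auto simp: not_frequently not_less dest: leD)
    then show ?thesis by (rule tandori_norm_tendsto_zero_if_tails_small[OF space coord])
  qed
qed

end
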